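(* Let $\{\mu_t:t\ge0\}$ be the solution of $\frac{d}{dt}\mu_t=F(\mu_t)-\mu_t$ with initial condition $\mu_0\in\mathcal P(\mathcal X)$, and assume $\mu_0\ll\lambda$. Assume that for every $\mu\in\mathcal M^+(\mathcal X)$ with $\mu\ll\lambda$ one has $\kappa_1(\mu)(\cdot|y)\ll\lambda$ and $\kappa_2(\mu)(\cdot|x)\ll\lambda$ for all $x,y\in\mathcal X$. Then $\mu_t\ll\lambda$ for all $t\in[0,+\infty)$. Moreover, if there exists $C\in(0,+\infty)$ such that, for all $\mu\in\mathcal M^+(\mathcal X)$ with $\mu\ll\lambda$, $$\Big\|\frac{d\kappa_2(\mu)(\cdot|x)}{d\lambda}\Big\|_\infty\le C\Big\|\frac{d\mu}{d\lambda}\Big\|_\infty\quad\forall x\in\mathcal X,$$ then the densities $f_t=d\mu_t/d\lambda$ satisfy $\|f_t\|_\infty\le\|f_0\|_\infty e^{Ct}$ for all $t\in[0,+\infty)$.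
   Context: $\mathcal X\subseteq\mathbb R^d$ is open, $\lambda$ is Lebesgue measure on $\mathcal X$, $\ll$ denotes absolute continuity. $\kappa(\cdot|\cdot,\cdot)$ is a stochastic kernel from $\mathcal X\times\mathcal X$ to $\mathcal X$ (each $\kappa(\cdot|x,y)$ a probability measure on $\mathcal X$, measurable in $(x,y)$). For $\mu\in\mathcal M^+(\mathcal X)$ (finite nonnegative Borel measures) define $F(\mu)(B):=\int\!\!\int\kappa(B|x,y)\,d\mu(x)\,d\mu(y)$, $\kappa_1(\mu)(B|y):=\int\kappa(B|x,y)\,d\mu(x)$ and $\kappa_2(\mu)(B|x):=\int\kappa(B|x,y)\,d\mu(y)$. A solution of $\frac{d}{dt}\mu_t=F(\mu_t)-\mu_t$ is a family $\{\mu_t\}\subseteq\mathcal P(\mathcal X)$ such that for every continuous $\varphi$ vanishing at infinity, $t\mapsto\int\varphi\,d\mu_t$ is differentiable on $\mathbb R^+$ with derivative $\int\varphi\,dF(\mu_t)-\int\varphi\,d\mu_t$ for $t>0$; it exists and is unique. *)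

theory Defs
  imports "HOL-Probability.Probability"
begin

definition borelX :: "'a::euclidean_space set \<Rightarrow> 'a measure" where
  "borelX X = restrict_space borel X"

definition lebX :: "'a::euclidean_space set \<Rightarrow> 'a measure" where
  "lebX X = restrict_space lborel X"

definition Mplus :: "'a::euclidean_space set \<Rightarrow> 'a measure set" where
  "Mplus X = {\<mu>. finite_measure \<mu> \<and> sets \<mu> = sets (borelX X)}"

definition Pmeas :: "'a::euclidean_space set \<Rightarrow> 'a measure set" where
  "Pmeas X = {\<mu>. prob_space \<mu> \<and> sets \<mu> = sets (borelX X)}"

definition stoch_kernel :: "'a::euclidean_space set \<Rightarrow> ('a \<Rightarrow> 'a \<Rightarrow> 'a measure) \<Rightarrow> bool" where
  "stoch_kernel X \<kappa> \<longleftrightarrow>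
     (\<forall>x\<in>X. \<forall>y\<in>X. \<kappa> x y \<in> Pmeas X) \<and>
     (\<forall>B\<in>sets (borelX X).
        (\<lambda>(x,y). emeasure (\<kappa> x y) B) \<in> borel_measurable (borelX X \<Otimes>\<^sub>M borelX X))"

definition Fop :: "'a::euclidean_space set \<Rightarrow> ('a \<Rightarrow> 'a \<Rightarrow> 'a measure) \<Rightarrow> 'a measure \<Rightarrow> 'a measure" where
  "Fop X \<kappa> \<mu> = measure_of X (sets (borelX X))
     (\<lambda>B. \<integral>\<^sup>+ x. \<integral>\<^sup>+ y. emeasure (\<kappa> x y) B \<partial>\<mu> \<partial>\<mu>)"

definition kappa1 :: "'a::euclidean_space set \<Rightarrow> ('a \<Rightarrow> 'a \<Rightarrow> 'a measure) \<Rightarrow> 'a measure \<Rightarrow> 'a \<Rightarrow> 'a measure" where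
  "kappa1 X \<kappa> \<mu> y = measure_of X (sets (borelX X)) (\<lambda>B. \<integral>\<^sup>+ x. emeasure (\<kappa> x y) B \<partial>\<mu>)"

definition kappa2 :: "'a::euclidean_space set \<Rightarrow> ('a \<Rightarrow> 'a \<Rightarrow> 'a measure) \<Rightarrow> 'a measure \<Rightarrow> 'a \<Rightarrow> 'a measure" where
  "kappa2 X \<kappa> \<mu> x = measure_of X (sets (borelX X)) (\<lambda>B. \<integral>\<^sup>+ y. emeasure (\<kappa> x y) B \<partial>\<mu>)"

(* continuous functions on X vanishing at infinity (C_0(X)) *)
definition C0 :: "'a::euclidean_space set \<Rightarrow> ('a \<Rightarrow> real) \<Rightarrow> bool" where
  "C0 X \<phi> \<longleftrightarrow> continuous_on X \<phi> \<and> (\<forall>e>0. compact {x\<in>X. \<bar>\<phi> x\<bar> \<ge> e})"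

definition is_solution :: "'a::euclidean_space set \<Rightarrow> ('a \<Rightarrow> 'a \<Rightarrow> 'a measure) \<Rightarrow> (real \<Rightarrow> 'a measure) \<Rightarrow> bool" where
  "is_solution X \<kappa> \<mu> \<longleftrightarrow>
     (\<forall>t\<ge>0. \<mu> t \<in> Pmeas X) \<and>
     (\<forall>\<phi>. C0 X \<phi> \<longrightarrow>
        (\<forall>t\<ge>0. (\<lambda>s. integral\<^sup>L (\<mu> s) \<phi>) differentiable (at t within {0..})) \<and>
        (\<forall>t>0. ((\<lambda>s. integral\<^sup>L (\<mu> s) \<phi>) has_real_derivative
                   (integral\<^sup>L (Fop X \<kappa> (\<mu> t)) \<phi> - integral\<^sup>L (\<mu> t) \<phi>)) (at t)))"

definition dens_sup :: "'a::euclidean_space set \<Rightarrow> 'a measure \<Rightarrow> ennreal" where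
  "dens_sup X \<mu> = esssup (lebX X) (RN_deriv (lebX X) \<mu>)"

end

theory Submission
  imports Defs
begin

text \<open>
  Both parts rest on the Duhamel formula \<open>e\<^sup>t \<mu>\<^sub>t(K) = \<mu>\<^sub>0(K) + \<integral>\<^sub>0\<^sup>t e\<^sup>r F(\<mu>\<^sub>r)(K) dr\<close>
  for compact \<open>K \<subseteq> X\<close>, obtained from the weak formulation by letting continuous test
  functions decrease to the indicator of K.  Writing \<open>F(\<nu>)(K) = \<integral> \<kappa>\<^sub>2(\<nu>)(K|x) d\<nu>(x)\<close>
  and splitting the mixing measure \<open>\<nu>\<close> into a well-behaved part and a remainder
  transfers the hypotheses on \<open>\<kappa>\<^sub>2\<close> to bounds on \<open>F(\<mu>\<^sub>r)\<close>.  Each part is then a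
  Gronwall-type argument for a nonnegative defect d(r) with supremum S on \<open>[0,t]\<close>:
  Duhamel's formula and inner regularity give \<open>d(r) \<le> (1 - e\<^sup>-\<^sup>t) S\<close>, forcing \<open>S = 0\<close>.
  For absolute continuity the defect is the singular mass of \<open>\<mu>\<^sub>r\<close> (the largest mass
  of a Lebesgue null set); for the density bound it is the excess
  \<open>\<integral>(f\<^sub>r - \<parallel>f\<^sub>0\<parallel>\<^sub>\<infinity> e\<^sup>C\<^sup>r)\<^sup>+ d\<lambda>\<close> of the density over the claimed bound.
\<close>

lemma space_borelX [simp]: "space (borelX X) = X"
  unfolding borelX_def by (simp add: space_restrict_space)

lemma space_lebX [simp]: "space (lebX X) = X"
  unfolding lebX_def by (simp add: space_restrict_space)

lemma sets_lebX: "sets (lebX X) = sets (borelX X)"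
  unfolding lebX_def borelX_def by (simp add: sets_restrict_space)

lemma sigma_algebra_borelX: "sigma_algebra X (sets (borelX X))"
  using sets.sigma_algebra_axioms[of "borelX X"] by simp

lemma sigma_finite_lebX: "open X \<Longrightarrow> sigma_finite_measure (lebX X)"
  unfolding lebX_def
  by (rule sigma_finite_measure_restrict_space) (auto simp: lborel.sigma_finite_measure_axioms)

lemma compact_in_borelX: "compact K \<Longrightarrow> K \<subseteq> X \<Longrightarrow> K \<in> sets (borelX X)"
  unfolding borelX_def by (auto simp: sets_restrict_space borel_compact)

lemma lebX_compact_finite:
  fixes X :: "'a::euclidean_space set"
  assumes X: "open X" and K: "compact K" "K \<subseteq> X"
  shows "emeasure (lebX X) K < \<infinity>"
proof -
  have "emeasure (lebX X) K = emeasure lborel K"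
    unfolding lebX_def by (rule emeasure_restrict_space) (use X K in auto)
  also have "\<dots> < \<infinity>" using K by (intro emeasure_bounded_finite compact_imp_bounded)
  finally show ?thesis .
qed

lemma borel_measurable_continuous_borelX:
  fixes f :: "'a::euclidean_space \<Rightarrow> real"
  assumes "continuous_on UNIV f" "sets M = sets (borelX X)"
  shows "f \<in> borel_measurable M"
proof -
  have "f \<in> borel_measurable (borelX X)"
    unfolding borelX_def
    by (rule measurable_restrict_space1) (rule borel_measurable_continuous_onI[OF assms(1)])
  then show ?thesis using measurable_cong_sets[OF assms(2) refl] by blast
qed

lemma Pmeas_D:
  assumes "\<nu> \<in> Pmeas X"
  shows "prob_space \<nu>" "sets \<nu> = sets (borelX X)" "space \<nu> = X"
proof -
  show "prob_space \<nu>" "sets \<nu> = sets (borelX X)" using assms unfolding Pmeas_def by auto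
  then show "space \<nu> = X" using sets_eq_imp_space_eq[of \<nu> "borelX X"] by simp
qed

text \<open>Obtained from inner regularity of finite Borel measures on the
  whole space, by pushing M forward along the inclusion of X.\<close>
lemma emeasure_le_of_compacts:
  fixes X :: "'a::euclidean_space set"
  assumes X: "open X" and fin: "finite_measure M" and sM: "sets M = sets (borelX X)"
    and A: "A \<in> sets M"
    and bound: "\<And>K. K \<subseteq> A \<Longrightarrow> compact K \<Longrightarrow> emeasure M K \<le> c"
  shows "emeasure M A \<le> c"
proof -
  interpret finite_measure M by fact
  have sp: "space M = X" using sets_eq_imp_space_eq[OF sM] by simp
  have id_meas: "(\<lambda>x. x) \<in> measurable M borel"
  proof -
    have "(\<lambda>x. x) \<in> measurable (borelX X) borel"
      unfolding borelX_def by (rule measurable_restrict_space1) simp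
    then show ?thesis using measurable_cong_sets[OF sM refl] by blast
  qed
  define M' where "M' = distr M borel (\<lambda>x. x)"
  have em: "emeasure M' B = emeasure M (B \<inter> X)" if "B \<in> sets borel" for B
    unfolding M'_def using emeasure_distr[OF id_meas, of B] that sp by simp
  have fin': "emeasure M' (space M') \<noteq> \<infinity>"
    using em[of UNIV] unfolding M'_def by simp
  have AX: "A \<subseteq> X" using sets.sets_into_space[OF A] sp by simp
  have A_borel: "A \<in> sets borel"
  proof -
    have "A \<in> sets (restrict_space borel X)" using A sM unfolding borelX_def by simp
    then show ?thesis using X by (subst (asm) sets_restrict_space_iff) auto
  qed
  have "emeasure M A = emeasure M' A" using em[OF A_borel] AX by (simp add: Int_absorb2)
  also have "\<dots> = (SUP K \<in> {K. K \<subseteq> A \<and> compact K}. emeasure M' K)"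
    by (rule inner_regular[OF _ fin' A_borel]) (simp add: M'_def)
  also have "\<dots> \<le> c"
  proof (rule SUP_least)
    fix K assume "K \<in> {K. K \<subseteq> A \<and> compact K}"
    then show "emeasure M' K \<le> c"
      using em[of K] AX bound by (auto simp: borel_compact Int_absorb2)
  qed
  finally show ?thesis .
qed

lemma emeasure_le_dens_sup:
  fixes X :: "'a::euclidean_space set"
  assumes X: "open X" and ac: "absolutely_continuous (lebX X) M" and sM: "sets M = sets (borelX X)"
    and K: "K \<in> sets (borelX X)"
  shows "emeasure M K \<le> dens_sup X M * emeasure (lebX X) K"
proof -
  interpret sigma_finite_measure "lebX X" by (rule sigma_finite_lebX[OF X])
  have KL: "K \<in> sets (lebX X)" using K sets_lebX by metis
  define h where "h = RN_deriv (lebX X) M"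
  have Md: "density (lebX X) h = M"
    unfolding h_def by (rule density_RN_deriv[OF ac]) (simp add: sM sets_lebX)
  have h_meas: "h \<in> borel_measurable (lebX X)" unfolding h_def by simp
  have "emeasure M K = (\<integral>\<^sup>+x. h x * indicator K x \<partial>lebX X)"
    using Md[symmetric] KL h_meas by (simp add: emeasure_density)
  also have "\<dots> \<le> (\<integral>\<^sup>+x. dens_sup X M * indicator K x \<partial>lebX X)"
  proof (rule nn_integral_mono_AE)
    show "AE x in lebX X. h x * indicator K x \<le> dens_sup X M * indicator K x"
      using esssup_AE[of h "lebX X"] unfolding dens_sup_def h_def
      by eventually_elim (auto simp: indicator_def)
  qed
  also have "\<dots> = dens_sup X M * emeasure (lebX X) K" by (rule nn_integral_cmult_indicator[OF KL])
  finally show ?thesis .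
qed

lemma dens_sup_density_le:
  fixes X :: "'a::euclidean_space set"
  assumes X: "open X" and g: "g \<in> borel_measurable (lebX X)" and ae: "AE x in lebX X. g x \<le> c"
  shows "dens_sup X (density (lebX X) g) \<le> c"
proof -
  interpret sigma_finite_measure "lebX X" by (rule sigma_finite_lebX[OF X])
  have "AE x in lebX X. g x = RN_deriv (lebX X) (density (lebX X) g) x"
    by (rule RN_deriv_unique[OF g refl])
  with ae have "AE x in lebX X. RN_deriv (lebX X) (density (lebX X) g) x \<le> c"
    by eventually_elim auto
  then show ?thesis unfolding dens_sup_def by (intro esssup_I) simp
qed

lemma absolutely_continuous_density:
  assumes g: "g \<in> borel_measurable M"
  shows "absolutely_continuous M (density M g)"
  unfolding absolutely_continuous_def
proof
  fix N assume N: "N \<in> null_sets M"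
  have "emeasure (density M g) N = (\<integral>\<^sup>+x. g x * indicator N x \<partial>M)"
    using N g by (intro emeasure_density) (auto simp: null_sets_def)
  also have "\<dots> = 0" by (rule nn_integral_null_set[OF N])
  finally show "N \<in> null_sets (density M g)" using N by (auto simp: null_sets_def)
qed

lemma stoch_kernel_prob:
  assumes "stoch_kernel X \<kappa>" "x \<in> X" "y \<in> X"
  shows "prob_space (\<kappa> x y)" "sets (\<kappa> x y) = sets (borelX X)" "space (\<kappa> x y) = X"
  using assms Pmeas_D unfolding stoch_kernel_def by blast+

lemma stoch_kernel_le_1:
  assumes "stoch_kernel X \<kappa>" "x \<in> X" "y \<in> X"
  shows "emeasure (\<kappa> x y) B \<le> 1"
  using prob_space.emeasure_le_1[OF stoch_kernel_prob(1)[OF assms]] .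

lemma stoch_kernel_measurable:
  assumes "stoch_kernel X \<kappa>" "B \<in> sets (borelX X)"
    and "sets M = sets (borelX X)" "sets N = sets (borelX X)"
  shows "(\<lambda>(x,y). emeasure (\<kappa> x y) B) \<in> borel_measurable (N \<Otimes>\<^sub>M M)"
proof -
  have "(\<lambda>(x,y). emeasure (\<kappa> x y) B) \<in> borel_measurable (borelX X \<Otimes>\<^sub>M borelX X)"
    using assms(1,2) unfolding stoch_kernel_def by blast
  moreover have "sets (N \<Otimes>\<^sub>M M) = sets (borelX X \<Otimes>\<^sub>M borelX X)"
    by (rule sets_pair_measure_cong) (rule assms(4), rule assms(3))
  ultimately show ?thesis using measurable_cong_sets by blast
qed

lemma stoch_kernel_measurable2:
  assumes "stoch_kernel X \<kappa>" "B \<in> sets (borelX X)" "sets M = sets (borelX X)" "x \<in> X"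
  shows "(\<lambda>y. emeasure (\<kappa> x y) B) \<in> borel_measurable M"
  using measurable_Pair2[OF stoch_kernel_measurable[OF assms(1,2,3), of "borelX X"], of x] assms(4)
  by simp

text \<open>Both
  \<open>\<kappa>\<^sub>2(\<nu>)(\<cdot>|x)\<close> and \<open>F(\<nu>)\<close> are mixtures, which gives their
  measures of Borel sets as integrals.\<close>
definition mixture :: "'a::euclidean_space set \<Rightarrow> 'b measure \<Rightarrow> ('b \<Rightarrow> 'a measure) \<Rightarrow> 'a measure"
  where "mixture X \<nu> P = measure_of X (sets (borelX X)) (\<lambda>B. \<integral>\<^sup>+y. emeasure (P y) B \<partial>\<nu>)"

lemma sets_measure_of_borelX: "sets (measure_of X (sets (borelX X)) m) = sets (borelX X)"
proof -
  have "sets (borelX X) \<subseteq> Pow X" using sets.space_closed[of "borelX X"] by simp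
  then show ?thesis by (simp add: sigma_algebra.sigma_sets_eq[OF sigma_algebra_borelX])
qed

lemma emeasure_mixture:
  assumes P: "\<And>y. y \<in> space \<nu> \<Longrightarrow> sets (P y) = sets (borelX X)"
    and meas: "\<And>B. B \<in> sets (borelX X) \<Longrightarrow> (\<lambda>y. emeasure (P y) B) \<in> borel_measurable \<nu>"
    and B: "B \<in> sets (borelX X)"
  shows "emeasure (mixture X \<nu> P) B = (\<integral>\<^sup>+y. emeasure (P y) B \<partial>\<nu>)"
  unfolding mixture_def
proof (rule emeasure_measure_of_sigma[OF sigma_algebra_borelX _ _ B])
  show "positive (sets (borelX X)) (\<lambda>B. \<integral>\<^sup>+y. emeasure (P y) B \<partial>\<nu>)"
    by (simp add: positive_def)
  show "countably_additive (sets (borelX X)) (\<lambda>B. \<integral>\<^sup>+y. emeasure (P y) B \<partial>\<nu>)"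
    unfolding countably_additive_def
  proof safe
    fix A :: "nat \<Rightarrow> _" assume A: "range A \<subseteq> sets (borelX X)" "disjoint_family A"
    have "(\<Sum>i. \<integral>\<^sup>+y. emeasure (P y) (A i) \<partial>\<nu>) = (\<integral>\<^sup>+y. (\<Sum>i. emeasure (P y) (A i)) \<partial>\<nu>)"
      by (rule nn_integral_suminf[symmetric]) (use A meas in auto)
    also have "\<dots> = (\<integral>\<^sup>+y. emeasure (P y) (\<Union> (range A)) \<partial>\<nu>)"
      by (intro nn_integral_cong suminf_emeasure) (use A P in auto)
    finally show "(\<Sum>i. \<integral>\<^sup>+y. emeasure (P y) (A i) \<partial>\<nu>) = (\<integral>\<^sup>+y. emeasure (P y) (\<Union> (range A)) \<partial>\<nu>)" .
  qed
qed

lemma sets_kappa2: "sets (kappa2 X \<kappa> \<nu> x) = sets (borelX X)"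
  unfolding kappa2_def by (rule sets_measure_of_borelX)

lemma sets_Fop: "sets (Fop X \<kappa> \<nu>) = sets (borelX X)"
  unfolding Fop_def by (rule sets_measure_of_borelX)

lemma kappa2_emeasure:
  assumes K: "stoch_kernel X \<kappa>" and s\<nu>: "sets \<nu> = sets (borelX X)" and x: "x \<in> X"
    and B: "B \<in> sets (borelX X)"
  shows "emeasure (kappa2 X \<kappa> \<nu> x) B = (\<integral>\<^sup>+y. emeasure (\<kappa> x y) B \<partial>\<nu>)"
proof -
  have "kappa2 X \<kappa> \<nu> x = mixture X \<nu> (\<kappa> x)" by (simp add: kappa2_def mixture_def)
  also have "emeasure \<dots> B = (\<integral>\<^sup>+y. emeasure (\<kappa> x y) B \<partial>\<nu>)"
    by (rule emeasure_mixture[OF _ stoch_kernel_measurable2[OF K _ s\<nu> x] B])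
       (use stoch_kernel_prob(2)[OF K x] sets_eq_imp_space_eq[OF s\<nu>] in auto)
  finally show ?thesis .
qed

lemma Fop_emeasure:
  assumes K: "stoch_kernel X \<kappa>" and s\<nu>: "sets \<nu> = sets (borelX X)" and fin: "finite_measure \<nu>"
    and B: "B \<in> sets (borelX X)"
  shows "emeasure (Fop X \<kappa> \<nu>) B = (\<integral>\<^sup>+x. emeasure (kappa2 X \<kappa> \<nu> x) B \<partial>\<nu>)"
proof -
  interpret finite_measure \<nu> by fact
  have sp: "space \<nu> = X" using sets_eq_imp_space_eq[OF s\<nu>] by simp
  have inner: "emeasure (kappa2 X \<kappa> \<nu> x) B = (\<integral>\<^sup>+y. emeasure (\<kappa> x y) B \<partial>\<nu>)"
    if "x \<in> space \<nu>" "B \<in> sets (borelX X)" for x B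
    using kappa2_emeasure[OF K s\<nu> _ that(2)] that(1) sp by simp
  have "Fop X \<kappa> \<nu> = mixture X \<nu> (kappa2 X \<kappa> \<nu>)"
    unfolding Fop_def mixture_def
  proof (rule measure_of_eq)
    show "sets (borelX X) \<subseteq> Pow X" using sets.space_closed[of "borelX X"] by simp
    fix A assume "A \<in> sigma_sets X (sets (borelX X))"
    then have "A \<in> sets (borelX X)" by (simp add: sigma_algebra.sigma_sets_eq[OF sigma_algebra_borelX])
    then show "(\<integral>\<^sup>+x. \<integral>\<^sup>+y. emeasure (\<kappa> x y) A \<partial>\<nu> \<partial>\<nu>) = (\<integral>\<^sup>+x. emeasure (kappa2 X \<kappa> \<nu> x) A \<partial>\<nu>)"
      using inner by (intro nn_integral_cong) simp
  qed
  also have "emeasure \<dots> B = (\<integral>\<^sup>+x. emeasure (kappa2 X \<kappa> \<nu> x) B \<partial>\<nu>)"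
  proof (rule emeasure_mixture[OF sets_kappa2 _ B])
    fix B assume B: "B \<in> sets (borelX X)"
    have "(\<lambda>x. \<integral>\<^sup>+y. emeasure (\<kappa> x y) B \<partial>\<nu>) \<in> borel_measurable \<nu>"
      using borel_measurable_nn_integral_fst[OF stoch_kernel_measurable[OF K B s\<nu> s\<nu>]] by simp
    then show "(\<lambda>x. emeasure (kappa2 X \<kappa> \<nu> x) B) \<in> borel_measurable \<nu>"
      by (rule measurable_cong[THEN iffD1, rotated]) (use inner B in simp)
  qed
  finally show ?thesis .
qed

lemma Fop_le_of_kappa2_le:
  assumes K: "stoch_kernel X \<kappa>" and \<nu>: "\<nu> \<in> Pmeas X" and B: "B \<in> sets (borelX X)"
    and bound: "\<And>x. x \<in> X \<Longrightarrow> emeasure (kappa2 X \<kappa> \<nu> x) B \<le> c"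
  shows "emeasure (Fop X \<kappa> \<nu>) B \<le> c"
proof -
  interpret prob_space \<nu> using Pmeas_D[OF \<nu>] by blast
  have "emeasure (Fop X \<kappa> \<nu>) B = (\<integral>\<^sup>+x. emeasure (kappa2 X \<kappa> \<nu> x) B \<partial>\<nu>)"
    by (rule Fop_emeasure[OF K Pmeas_D(2)[OF \<nu>] finite_measure_axioms B])
  also have "\<dots> \<le> (\<integral>\<^sup>+x. c \<partial>\<nu>)"
    by (rule nn_integral_mono) (use bound Pmeas_D(3)[OF \<nu>] in auto)
  also have "\<dots> = c" by (simp add: emeasure_space_1)
  finally show ?thesis .
qed

lemma Fop_prob:
  assumes K: "stoch_kernel X \<kappa>" and \<nu>: "\<nu> \<in> Pmeas X"
  shows "prob_space (Fop X \<kappa> \<nu>)"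
proof -
  interpret prob_space \<nu> using Pmeas_D[OF \<nu>] by simp
  have sp: "space \<nu> = X" by (rule Pmeas_D(3)[OF \<nu>])
  have X_sets: "X \<in> sets (borelX X)" by (metis sets.top space_borelX)
  have "emeasure (Fop X \<kappa> \<nu>) X = (\<integral>\<^sup>+x. emeasure (kappa2 X \<kappa> \<nu> x) X \<partial>\<nu>)"
    by (rule Fop_emeasure[OF K Pmeas_D(2)[OF \<nu>] finite_measure_axioms X_sets])
  also have "\<dots> = (\<integral>\<^sup>+x. \<integral>\<^sup>+y. 1 \<partial>\<nu> \<partial>\<nu>)"
  proof (intro nn_integral_cong)
    fix x assume x: "x \<in> space \<nu>"
    have "emeasure (kappa2 X \<kappa> \<nu> x) X = (\<integral>\<^sup>+y. emeasure (\<kappa> x y) X \<partial>\<nu>)"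
      using kappa2_emeasure[OF K Pmeas_D(2)[OF \<nu>] _ X_sets] x sp by simp
    also have "\<dots> = (\<integral>\<^sup>+y. 1 \<partial>\<nu>)"
    proof (rule nn_integral_cong)
      fix y assume "y \<in> space \<nu>"
      then show "emeasure (\<kappa> x y) X = 1"
        using stoch_kernel_prob[OF K, of x y] x sp prob_space.emeasure_space_1 by metis
    qed
    finally show "emeasure (kappa2 X \<kappa> \<nu> x) X = (\<integral>\<^sup>+y. 1 \<partial>\<nu>)" .
  qed
  also have "\<dots> = 1" by (simp add: emeasure_space_1)
  finally show ?thesis by (intro prob_spaceI) (simp add: sets_eq_imp_space_eq[OF sets_Fop])
qed
lemma C0_of_compact_support:
  fixes \<phi> :: "'a::euclidean_space \<Rightarrow> real"
  assumes cont: "continuous_on UNIV \<phi>" and T: "compact T" "T \<subseteq> X"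
    and zero: "\<And>x. x \<notin> T \<Longrightarrow> \<phi> x = 0"
  shows "C0 X \<phi>"
  unfolding C0_def
proof safe
  show "continuous_on X \<phi>" using cont continuous_on_subset by blast
  fix e :: real assume e: "e > 0"
  have "{x \<in> X. e \<le> \<bar>\<phi> x\<bar>} = {x. e \<le> \<bar>\<phi> x\<bar>} \<inter> T" using zero e T(2) by force
  moreover have "compact ({x. e \<le> \<bar>\<phi> x\<bar>} \<inter> T)"
    by (intro closed_Int_compact closed_Collect_le T(1) continuous_intros
        continuous_on_subset[OF cont]) auto
  ultimately show "compact {x \<in> X. e \<le> \<bar>\<phi> x\<bar>}" by simp
qed

lemma compact_test_functions:
  fixes K :: "'a::euclidean_space set"
  assumes X: "open X" and K: "compact K" "K \<subseteq> X" "K \<noteq> {}"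
  obtains \<phi> :: "nat \<Rightarrow> 'a \<Rightarrow> real" where "\<And>n. C0 X (\<phi> n)" "\<And>n x. 0 \<le> \<phi> n x" "\<And>n x. \<phi> n x \<le> 1"
    "\<And>n x. \<phi> (Suc n) x \<le> \<phi> n x" "\<And>x. (\<lambda>n. \<phi> n x) \<longlonglongrightarrow> indicator K x"
    "\<And>n. continuous_on UNIV (\<phi> n)"
proof -
  obtain \<delta> where \<delta>: "\<delta> > 0" "(\<Union>x\<in>K. cball x \<delta>) \<subseteq> X"
    using compact_subset_open_imp_cball_epsilon_subset[OF K(1) X K(2)] by blast
  define \<phi> where "\<phi> n x = max 0 (1 - (real n + 1) / \<delta> * infdist x K)" for n x
  have cont: "continuous_on UNIV (\<phi> n)" for n
    unfolding \<phi>_def by (intro continuous_intros)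
  have nonneg: "0 \<le> \<phi> n x" for n x unfolding \<phi>_def by simp
  have le1: "\<phi> n x \<le> 1" for n x unfolding \<phi>_def using infdist_nonneg[of x K] \<delta>(1)
    by (simp add: zero_le_divide_iff)
  have mono: "\<phi> (Suc n) x \<le> \<phi> n x" for n x
  proof -
    have "(real n + 1) / \<delta> * infdist x K \<le> (real (Suc n) + 1) / \<delta> * infdist x K"
      using infdist_nonneg[of x K] \<delta>(1) by (intro mult_right_mono divide_right_mono) auto
    then show ?thesis unfolding \<phi>_def by simp
  qed
  have vanish: "\<phi> n x = 0" if "\<delta> \<le> (real n + 1) * infdist x K" for n x
  proof -
    have "1 \<le> (real n + 1) / \<delta> * infdist x K" using that \<delta>(1) by (simp add: field_simps)
    then show ?thesis unfolding \<phi>_def by simp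
  qed
  have lim: "(\<lambda>n. \<phi> n x) \<longlonglongrightarrow> indicator K x" for x
  proof (cases "x \<in> K")
    case False
    have pos: "infdist x K > 0"
      using infdist_pos_not_in_closed[OF compact_imp_closed[OF K(1)] K(3) False] .
    obtain N :: nat where N: "\<delta> / infdist x K < real N" using reals_Archimedean2 by blast
    have "\<delta> \<le> (real n + 1) * infdist x K" if "n \<ge> N" for n
    proof -
      have "\<delta> / infdist x K < real n + 1" using N that by linarith
      then show ?thesis using pos by (simp add: divide_less_eq)
    qed
    then have "eventually (\<lambda>n. \<phi> n x = 0) sequentially"
      unfolding eventually_sequentially using vanish by blast
    then show ?thesis using False by (simp add: tendsto_eventually)
  qed (simp add: \<phi>_def)
  have support: "{x. infdist x K \<le> \<delta>} \<subseteq> X"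
  proof
    fix x assume "x \<in> {x. infdist x K \<le> \<delta>}"
    moreover obtain a where "a \<in> K" "infdist x K = dist x a"
      using infdist_attains_inf[OF compact_imp_closed[OF K(1)] K(3)] by blast
    ultimately show "x \<in> X" using \<delta>(2) by (force simp: dist_commute)
  qed
  have "C0 X (\<phi> n)" for n
  proof (rule C0_of_compact_support[OF cont compact_infdist_le[OF K(3,1) \<delta>(1)] support])
    fix x assume "x \<notin> {x. infdist x K \<le> \<delta>}"
    then have "\<delta> \<le> 1 * infdist x K" by simp
    also have "\<dots> \<le> (real n + 1) * infdist x K" by (intro mult_right_mono) (auto simp: infdist_nonneg)
    finally show "\<phi> n x = 0" by (rule vanish)
  qed
  then show ?thesis using that nonneg le1 mono lim cont by blast
qed

lemma test_integral_bounds: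
  fixes \<phi> :: "'a::euclidean_space \<Rightarrow> real"
  assumes M: "prob_space M" "sets M = sets (borelX X)"
    and \<phi>: "continuous_on UNIV \<phi>" "\<And>x. 0 \<le> \<phi> x" "\<And>x. \<phi> x \<le> 1"
  shows "integrable M \<phi>" "0 \<le> integral\<^sup>L M \<phi>" "integral\<^sup>L M \<phi> \<le> 1"
proof -
  interpret prob_space M by (rule M(1))
  show int: "integrable M \<phi>"
    by (rule integrable_const_bound[where B=1])
       (use \<phi>(2,3) borel_measurable_continuous_borelX[OF \<phi>(1) M(2)] in auto)
  show "0 \<le> integral\<^sup>L M \<phi>" by (intro integral_nonneg_AE) (simp add: \<phi>(2))
  have "integral\<^sup>L M \<phi> \<le> integral\<^sup>L M (\<lambda>_. 1::real)"
    by (intro integral_mono int) (auto simp: \<phi>(3))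
  then show "integral\<^sup>L M \<phi> \<le> 1" by (simp add: prob_space)
qed

lemma test_integral_tendsto:
  fixes \<phi> :: "nat \<Rightarrow> 'a::euclidean_space \<Rightarrow> real"
  assumes fin: "finite_measure M" and sM: "sets M = sets (borelX X)"
    and K: "compact K" "K \<subseteq> X"
    and \<phi>: "\<And>n. continuous_on UNIV (\<phi> n)" "\<And>n x. 0 \<le> \<phi> n x" "\<And>n x. \<phi> n x \<le> 1"
      "\<And>x. (\<lambda>n. \<phi> n x) \<longlonglongrightarrow> indicator K x"
  shows "(\<lambda>n. integral\<^sup>L M (\<phi> n)) \<longlonglongrightarrow> measure M K"
proof -
  interpret finite_measure M by fact
  have sp: "space M = X" using sets_eq_imp_space_eq[OF sM] by simp
  have KM: "K \<in> sets M" using compact_in_borelX[OF K] sM by simp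
  have "(\<lambda>n. integral\<^sup>L M (\<phi> n)) \<longlonglongrightarrow> integral\<^sup>L M (indicator K)"
    by (rule integral_dominated_convergence[where w="\<lambda>_. 1"])
       (use borel_measurable_continuous_borelX[OF \<phi>(1) sM] \<phi>(2-4) KM in auto)
  moreover have "integral\<^sup>L M (indicator K :: _ \<Rightarrow> real) = measure M K"
    using K(2) sp by (simp add: Int_absorb2)
  ultimately show ?thesis by simp
qed

lemma solution_Pmeas:
  assumes "is_solution X \<kappa> \<mu>" "0 \<le> r"
  shows "\<mu> r \<in> Pmeas X"
  using assms unfolding is_solution_def by blast

text \<open>Weak form of the equation, integrated with the factor \<open>e\<^sup>r\<close>: for a test function
  \<open>\<phi>\<close>, \<open>d/dr (e\<^sup>r \<integral>\<phi> d\<mu>\<^sub>r) = e\<^sup>r \<integral>\<phi> dF(\<mu>\<^sub>r)\<close>, so the fundamental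
  theorem of calculus applies.\<close>
lemma solution_test_identity:
  assumes sol: "is_solution X \<kappa> \<mu>" and \<phi>: "C0 X \<phi>" and t: "0 \<le> t"
  shows "((\<lambda>r. exp r * integral\<^sup>L (Fop X \<kappa> (\<mu> r)) \<phi>) has_integral
           exp t * integral\<^sup>L (\<mu> t) \<phi> - integral\<^sup>L (\<mu> 0) \<phi>) {0..t}"
proof -
  define m where "m r = integral\<^sup>L (\<mu> r) \<phi>" for r
  have dif: "\<And>r. 0 \<le> r \<Longrightarrow> m differentiable (at r within {0..})"
    and der: "\<And>r. 0 < r \<Longrightarrow> (m has_real_derivative (integral\<^sup>L (Fop X \<kappa> (\<mu> r)) \<phi> - m r)) (at r)"
    using sol \<phi> unfolding is_solution_def m_def by blast+
  have "continuous (at r within {0..t}) m" if "r \<in> {0..t}" for r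
    using differentiable_imp_continuous_within[OF dif[of r]] that
    by (auto intro: continuous_within_subset)
  then have cont: "continuous_on {0..t} m" by (simp add: continuous_on_eq_continuous_within)
  have "((\<lambda>r. exp r * integral\<^sup>L (Fop X \<kappa> (\<mu> r)) \<phi>) has_integral exp t * m t - exp 0 * m 0) {0..t}"
  proof (rule fundamental_theorem_of_calculus_interior[OF t])
    show "continuous_on {0..t} (\<lambda>r. exp r * m r)" by (intro continuous_intros cont)
    fix r assume r: "r \<in> {0<..<t}"
    have "((\<lambda>r. exp r * m r) has_real_derivative
            exp r * m r + exp r * (integral\<^sup>L (Fop X \<kappa> (\<mu> r)) \<phi> - m r)) (at r)"
      using r by (auto intro!: derivative_eq_intros der)
    then show "((\<lambda>r. exp r * m r) has_vector_derivative exp r * integral\<^sup>L (Fop X \<kappa> (\<mu> r)) \<phi>) (at r)"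
      by (simp add: has_real_derivative_iff_has_vector_derivative[symmetric] algebra_simps)
  qed
  then show ?thesis by (simp add: m_def)
qed

text \<open>It follows from the test
  identity by monotone convergence along test functions decreasing to the indicator of K.\<close>
lemma duhamel_formula:
  fixes X :: "'a::euclidean_space set"
  assumes X: "open X" and Kk: "stoch_kernel X \<kappa>" and sol: "is_solution X \<kappa> \<mu>"
    and t: "0 \<le> t" and K: "compact K" "K \<subseteq> X"
  shows "((\<lambda>r. exp r * measure (Fop X \<kappa> (\<mu> r)) K) has_integral
           exp t * measure (\<mu> t) K - measure (\<mu> 0) K) {0..t}"
proof (cases "K = {}")
  case False
  obtain \<phi> :: "nat \<Rightarrow> 'a \<Rightarrow> real" where \<phi>: "\<And>n. C0 X (\<phi> n)" "\<And>n x. 0 \<le> \<phi> n x"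
    "\<And>n x. \<phi> n x \<le> 1" "\<And>n x. \<phi> (Suc n) x \<le> \<phi> n x" "\<And>x. (\<lambda>n. \<phi> n x) \<longlonglongrightarrow> indicator K x"
    "\<And>n. continuous_on UNIV (\<phi> n)"
    using compact_test_functions[OF X K False] by blast
  have \<mu>_prob: "prob_space (\<mu> r)" "sets (\<mu> r) = sets (borelX X)" if "0 \<le> r" for r
    using Pmeas_D[OF solution_Pmeas[OF sol that]] by auto
  have F_prob: "prob_space (Fop X \<kappa> (\<mu> r))" if "0 \<le> r" for r
    by (rule Fop_prob[OF Kk solution_Pmeas[OF sol that]])
  have bounds: "integrable M (\<phi> n)" "0 \<le> integral\<^sup>L M (\<phi> n)" "integral\<^sup>L M (\<phi> n) \<le> 1"
    if "prob_space M" "sets M = sets (borelX X)" for M n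
    using test_integral_bounds[OF that \<phi>(6,2,3)] by auto
  define I where "I n = exp t * integral\<^sup>L (\<mu> t) (\<phi> n) - integral\<^sup>L (\<mu> 0) (\<phi> n)" for n
  have test: "((\<lambda>r. exp r * integral\<^sup>L (Fop X \<kappa> (\<mu> r)) (\<phi> n)) has_integral I n) {0..t}" for n
    unfolding I_def by (rule solution_test_identity[OF sol \<phi>(1) t])
  have mc: "(\<lambda>r. exp r * measure (Fop X \<kappa> (\<mu> r)) K) integrable_on {0..t} \<and>
      (\<lambda>n. integral {0..t} (\<lambda>r. exp r * integral\<^sup>L (Fop X \<kappa> (\<mu> r)) (\<phi> n)))
        \<longlonglongrightarrow> integral {0..t} (\<lambda>r. exp r * measure (Fop X \<kappa> (\<mu> r)) K)"
  proof (rule monotone_convergence_decreasing)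
    fix n
    show "(\<lambda>r. exp r * integral\<^sup>L (Fop X \<kappa> (\<mu> r)) (\<phi> n)) integrable_on {0..t}"
      using test by blast
    fix r :: real assume "r \<in> {0..t}"
    then show "exp r * integral\<^sup>L (Fop X \<kappa> (\<mu> r)) (\<phi> (Suc n)) \<le> exp r * integral\<^sup>L (Fop X \<kappa> (\<mu> r)) (\<phi> n)"
      using bounds(1)[OF F_prob sets_Fop] \<phi>(4) by (intro mult_left_mono integral_mono) auto
  next
    fix r :: real assume "r \<in> {0..t}"
    then show "(\<lambda>n. exp r * integral\<^sup>L (Fop X \<kappa> (\<mu> r)) (\<phi> n)) \<longlonglongrightarrow> exp r * measure (Fop X \<kappa> (\<mu> r)) K"
      using F_prob[of r] by (intro tendsto_mult_left test_integral_tendsto[OF _ sets_Fop K \<phi>(6,2,3,5)])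
         (auto simp: prob_space_def)
  next
    have "\<bar>I n\<bar> \<le> exp t + 1" for n
    proof -
      have "0 \<le> integral\<^sup>L (\<mu> t) (\<phi> n)" "integral\<^sup>L (\<mu> t) (\<phi> n) \<le> 1"
        "0 \<le> integral\<^sup>L (\<mu> 0) (\<phi> n)" "integral\<^sup>L (\<mu> 0) (\<phi> n) \<le> 1"
        using bounds(2,3)[OF \<mu>_prob] t by auto
      then have "0 \<le> exp t * integral\<^sup>L (\<mu> t) (\<phi> n)" "exp t * integral\<^sup>L (\<mu> t) (\<phi> n) \<le> exp t"
        by (auto simp: mult_left_le)
      with \<open>integral\<^sup>L (\<mu> 0) (\<phi> n) \<le> 1\<close> \<open>0 \<le> integral\<^sup>L (\<mu> 0) (\<phi> n)\<close> show ?thesis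
        unfolding I_def by linarith
    qed
    then show "bounded (range (\<lambda>n. integral {0..t} (\<lambda>r. exp r * integral\<^sup>L (Fop X \<kappa> (\<mu> r)) (\<phi> n))))"
      unfolding bounded_iff by (auto simp: integral_unique[OF test])
  qed
  have "I \<longlonglongrightarrow> exp t * measure (\<mu> t) K - measure (\<mu> 0) K"
    unfolding I_def using \<mu>_prob t
    by (intro tendsto_diff tendsto_mult_left test_integral_tendsto[OF _ _ K \<phi>(6,2,3,5)])
       (auto simp: prob_space_def)
  moreover have "(\<lambda>n. integral {0..t} (\<lambda>r. exp r * integral\<^sup>L (Fop X \<kappa> (\<mu> r)) (\<phi> n))) = I"
    by (simp add: integral_unique[OF test])
  ultimately have "integral {0..t} (\<lambda>r. exp r * measure (Fop X \<kappa> (\<mu> r)) K)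
      = exp t * measure (\<mu> t) K - measure (\<mu> 0) K"
    using LIMSEQ_unique[OF conjunct2[OF mc]] by simp
  then show ?thesis using conjunct1[OF mc] by (metis has_integral_integral)
qed simp

text \<open>With \<open>l\<^sub>0 = 0\<close> this is the
  estimate behind absolute continuity; with \<open>l\<^sub>0 = \<parallel>f\<^sub>0\<parallel>\<^sub>\<infinity>\<close> the one behind the
  density bound.\<close>
lemma duhamel_growth_bound:
  fixes X :: "'a::euclidean_space set"
  assumes X: "open X" and Kk: "stoch_kernel X \<kappa>" and sol: "is_solution X \<kappa> \<mu>"
    and t: "0 \<le> t" and K: "compact K" "K \<subseteq> X" and l0: "0 \<le> l0" and C: "0 \<le> C"
    and init: "measure (\<mu> 0) K \<le> l0 * measure (lebX X) K"
    and F: "\<And>r. r \<in> {0..t} \<Longrightarrow>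
      measure (Fop X \<kappa> (\<mu> r)) K \<le> C * l0 * exp (C * r) * measure (lebX X) K + S"
  shows "measure (\<mu> t) K \<le> l0 * exp (C * t) * measure (lebX X) K + (1 - exp (- t)) * S"
proof -
  define a where "a = l0 * measure (lebX X) K"
  have a0: "0 \<le> a" unfolding a_def using l0 by simp
  define G where "G r = C / (C + 1) * a * exp ((C + 1) * r) + S * exp r" for r
  define g where "g r = C * a * exp ((C + 1) * r) + S * exp r" for r
  have "(G has_real_derivative g r) (at r)" for r
  proof -
    have "(G has_real_derivative C / (C + 1) * a * (exp ((C + 1) * r) * (C + 1)) + S * exp r) (at r)"
      unfolding G_def by (auto intro!: derivative_eq_intros)
    moreover have "C / (C + 1) * a * (exp ((C + 1) * r) * (C + 1)) = C * a * exp ((C + 1) * r)"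
      using C by simp
    ultimately show ?thesis by (simp add: g_def)
  qed
  then have g_int: "(g has_integral G t - G 0) {0..t}"
    using t by (intro fundamental_theorem_of_calculus)
       (auto simp: has_real_derivative_iff_has_vector_derivative[symmetric]
             intro: has_field_derivative_at_within)
  have "exp t * measure (\<mu> t) K - measure (\<mu> 0) K \<le> G t - G 0"
  proof (rule has_integral_le[OF duhamel_formula[OF X Kk sol t K] g_int])
    fix r assume r: "r \<in> {0..t}"
    have "measure (Fop X \<kappa> (\<mu> r)) K \<le> C * a * exp (C * r) + S"
      using F[OF r] by (simp add: a_def algebra_simps)
    then have "exp r * measure (Fop X \<kappa> (\<mu> r)) K \<le> exp r * (C * a * exp (C * r) + S)"
      by simp
    also have "\<dots> = g r" by (simp add: g_def algebra_simps exp_add[symmetric])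
    finally show "exp r * measure (Fop X \<kappa> (\<mu> r)) K \<le> g r" .
  qed
  moreover have "C / (C + 1) * (a * (exp ((C + 1) * t) - 1)) \<le> 1 * (a * (exp ((C + 1) * t) - 1))"
    using C a0 t by (intro mult_right_mono mult_nonneg_nonneg) auto
  moreover have "measure (\<mu> 0) K \<le> a" using init by (simp add: a_def)
  ultimately have "exp t * measure (\<mu> t) K \<le> exp t * (a * exp (C * t) + (1 - exp (- t)) * S)"
    by (simp add: G_def algebra_simps exp_add[symmetric] exp_minus)
  then show ?thesis by (simp add: a_def mult_ac)
qed

text \<open>Splitting the density of the mixing measure in \<open>\<kappa>\<^sub>2\<close>: if \<open>g \<le> f\<close>, then
  \<open>\<kappa>\<^sub>2(f N)(B|x) \<le> \<kappa>\<^sub>2(g N)(B|x) + \<integral>(f - g) dN\<close>, because \<open>\<kappa>(B|x,y) \<le> 1\<close>.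
  This is how the hypotheses on \<open>\<kappa>\<^sub>2\<close>, which only concern absolutely continuous
  measures, are transferred to the solution.\<close>
lemma kappa2_density_split:
  fixes X :: "'a::euclidean_space set"
  assumes Kk: "stoch_kernel X \<kappa>" and sN: "sets N = sets (borelX X)" and x: "x \<in> X"
    and f: "f \<in> borel_measurable N" and g: "g \<in> borel_measurable N" and gf: "\<And>y. g y \<le> f y"
    and B: "B \<in> sets (borelX X)"
  shows "emeasure (kappa2 X \<kappa> (density N f) x) B
           \<le> emeasure (kappa2 X \<kappa> (density N g) x) B + (\<integral>\<^sup>+y. f y - g y \<partial>N)"
proof -
  have sp: "space N = X" using sets_eq_imp_space_eq[OF sN] by simp
  have k: "(\<lambda>y. emeasure (\<kappa> x y) B) \<in> borel_measurable N"
    by (rule stoch_kernel_measurable2[OF Kk B sN x])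
  have kappa2_density: "emeasure (kappa2 X \<kappa> (density N h) x) B = (\<integral>\<^sup>+y. h y * emeasure (\<kappa> x y) B \<partial>N)"
    if h: "h \<in> borel_measurable N" for h
    using kappa2_emeasure[OF Kk _ x B, of "density N h"] sN nn_integral_density[OF h k] by simp
  have "emeasure (kappa2 X \<kappa> (density N f) x) B
      = (\<integral>\<^sup>+y. g y * emeasure (\<kappa> x y) B + (f y - g y) * emeasure (\<kappa> x y) B \<partial>N)"
    unfolding kappa2_density[OF f]
    by (intro nn_integral_cong) (simp add: distrib_right[symmetric] add_diff_inverse_ennreal gf)
  also have "\<dots> = emeasure (kappa2 X \<kappa> (density N g) x) B
      + (\<integral>\<^sup>+y. (f y - g y) * emeasure (\<kappa> x y) B \<partial>N)"
    unfolding kappa2_density[OF g] using f g k by (intro nn_integral_add) auto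
  also have "(\<integral>\<^sup>+y. (f y - g y) * emeasure (\<kappa> x y) B \<partial>N) \<le> (\<integral>\<^sup>+y. f y - g y \<partial>N)"
  proof (rule nn_integral_mono)
    fix y assume "y \<in> space N"
    then have "emeasure (\<kappa> x y) B \<le> 1" using stoch_kernel_le_1[OF Kk x] sp by simp
    then show "(f y - g y) * emeasure (\<kappa> x y) B \<le> f y - g y"
      using mult_left_mono[of "emeasure (\<kappa> x y) B" 1 "f y - g y"] by simp
  qed
  finally show ?thesis by (simp add: add_left_mono)
qed

text \<open>The singular mass of M: the largest mass M can give to a Lebesgue null set.
  M is absolutely continuous iff its singular mass vanishes.\<close>
definition singular_mass :: "'a::euclidean_space set \<Rightarrow> 'a measure \<Rightarrow> real" where
  "singular_mass X M = (SUP N \<in> null_sets (lebX X). measure M N)"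

lemma bdd_above_null_measures:
  "finite_measure M \<Longrightarrow> bdd_above ((\<lambda>N. measure M N) ` null_sets (lebX X))"
  by (rule bdd_aboveI[where M="measure M (space M)"]) (auto intro: finite_measure.bounded_measure)

lemma measure_le_singular_mass:
  "finite_measure M \<Longrightarrow> N \<in> null_sets (lebX X) \<Longrightarrow> measure M N \<le> singular_mass X M"
  unfolding singular_mass_def by (rule cSUP_upper[OF _ bdd_above_null_measures])

lemma singular_mass_nonneg: "finite_measure M \<Longrightarrow> 0 \<le> singular_mass X M"
  using measure_le_singular_mass[of M "{}"] by simp

lemma singular_mass_le_1:
  assumes "prob_space M"
  shows "singular_mass X M \<le> 1"
  unfolding singular_mass_def
  by (rule cSUP_least) (auto intro: prob_space.prob_le_1[OF assms])

lemma absolutely_continuous_singular_mass: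
  assumes fin: "finite_measure M" and sM: "sets M = sets (borelX X)"
    and s: "singular_mass X M \<le> 0"
  shows "absolutely_continuous (lebX X) M"
  unfolding absolutely_continuous_def
proof
  fix N assume N: "N \<in> null_sets (lebX X)"
  have NM: "N \<in> sets M" using N sM sets_lebX by (auto simp: null_sets_def)
  have "measure M N = 0"
    using measure_le_singular_mass[OF fin N] s by (simp add: antisym)
  then show "N \<in> null_sets M"
    using NM finite_measure.emeasure_eq_measure[OF fin] by (simp add: null_sets_def)
qed

text \<open>The singular mass is attained: some null set U carries it, so that M gives no mass
  to null sets outside U.  U is a countable union of almost maximising null sets.\<close>
lemma maximal_null_set:
  fixes X :: "'a::euclidean_space set"
  assumes fin: "finite_measure M" and sM: "sets M = sets (borelX X)"
  obtains U where "U \<in> null_sets (lebX X)" "\<And>N. N \<in> null_sets (lebX X) \<Longrightarrow> emeasure M (N - U) = 0"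
proof -
  interpret finite_measure M by fact
  let ?L = "lebX X"
  define s where "s = singular_mass X M"
  have sL: "sets ?L = sets M" using sM sets_lebX by metis
  have "\<exists>N \<in> null_sets ?L. s - 1 / (real n + 1) < measure M N" for n
  proof -
    have "s - 1 / (real n + 1) < s" by simp
    then show ?thesis unfolding s_def singular_mass_def
      by (subst (asm) less_cSUP_iff[OF _ bdd_above_null_measures[OF fin]]) auto
  qed
  then obtain Nn where Nn: "\<And>n. Nn n \<in> null_sets ?L" "\<And>n. s - 1 / (real n + 1) < measure M (Nn n)"
    by metis
  define U where "U = (\<Union>n. Nn n)"
  have U: "U \<in> null_sets ?L" unfolding U_def using Nn(1) by (intro null_sets_UN) auto
  have UM: "U \<in> sets M" using U sL by (auto simp: null_sets_def)
  have "s \<le> measure M U"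
  proof (rule LIMSEQ_le_const2)
    show "(\<lambda>n. s - 1 / (real n + 1)) \<longlonglongrightarrow> s"
      using tendsto_diff[OF tendsto_const LIMSEQ_inverse_real_of_nat_add[of 0]]
      by (simp add: inverse_eq_divide add.commute)
    have "measure M (Nn n) \<le> measure M U" for n
      using Nn(1)[of n] UM sL unfolding U_def by (intro finite_measure_mono) (auto simp: null_sets_def)
    then show "\<exists>N. \<forall>n\<ge>N. s - 1 / (real n + 1) \<le> measure M U"
      using Nn(2) less_imp_le order_less_le_trans by blast
  qed
  show ?thesis
  proof (rule that[OF U])
    fix N assume N: "N \<in> null_sets ?L"
    have NM: "N \<in> sets M" using N sL by (auto simp: null_sets_def)
    have "measure M (N - U) + measure M U = measure M (N \<union> U)"
      using NM UM by (subst finite_measure_Union[symmetric]) (auto simp: Un_Diff_cancel2)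
    also have "\<dots> \<le> s" unfolding s_def using N U by (intro measure_le_singular_mass fin) auto
    finally have "measure M (N - U) \<le> 0" using \<open>s \<le> measure M U\<close> by simp
    then show "emeasure M (N - U) = 0"
      using NM UM by (simp add: emeasure_eq_measure measure_nonneg antisym)
  qed
qed

text \<open>Removing from M a null set U that carries its whole singular part leaves a finite,
  absolutely continuous measure, to which the hypotheses on \<open>\<kappa>\<^sub>2\<close> apply.\<close>
lemma absolutely_continuous_off_null_set:
  assumes PM: "M \<in> Pmeas X" and U: "U \<in> null_sets (lebX X)"
    and off_U: "\<And>N. N \<in> null_sets (lebX X) \<Longrightarrow> emeasure M (N - U) = 0"
  shows "density M (indicator (X - U)) \<in> Mplus X"
    and "absolutely_continuous (lebX X) (density M (indicator (X - U)))"
proof -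
  interpret prob_space M using Pmeas_D[OF PM] by blast
  have sM: "sets M = sets (borelX X)" and spM: "space M = X" using Pmeas_D[OF PM] by auto
  have UM: "U \<in> sets M" using U sets_lebX sM by (auto simp: null_sets_def)
  have XU: "X - U \<in> sets M" using UM spM by (metis sets.compl_sets)
  define \<nu> where "\<nu> = density M (indicator (X - U))"
  have s\<nu>: "sets \<nu> = sets (borelX X)" unfolding \<nu>_def using sM by simp
  have \<nu>_emeasure: "emeasure \<nu> N = emeasure M (N - U)" if N: "N \<in> sets M" for N
  proof -
    have "N \<subseteq> X" using sets.sets_into_space[OF N] spM by simp
    then have "emeasure \<nu> N = (\<integral>\<^sup>+x. indicator (N - U) x \<partial>M)"
      unfolding \<nu>_def using N XU
      by (simp add: emeasure_density) (intro nn_integral_cong, auto simp: indicator_def)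
    then show ?thesis using N UM by simp
  qed
  have "finite_measure \<nu>"
  proof (rule finite_measureI)
    have "emeasure \<nu> (space \<nu>) = emeasure M (X - U)"
      using \<nu>_emeasure[of X] spM sets.top[of M] by (simp add: \<nu>_def)
    also have "\<dots> \<le> 1" by (rule emeasure_le_1)
    finally show "emeasure \<nu> (space \<nu>) \<noteq> \<infinity>" by (auto simp: top_unique)
  qed
  then show "density M (indicator (X - U)) \<in> Mplus X" using s\<nu> by (simp add: Mplus_def \<nu>_def)
  show "absolutely_continuous (lebX X) (density M (indicator (X - U)))"
    unfolding absolutely_continuous_def \<nu>_def[symmetric]
  proof
    fix N assume N: "N \<in> null_sets (lebX X)"
    then have NM: "N \<in> sets M" using sets_lebX sM by (auto simp: null_sets_def)
    then show "N \<in> null_sets \<nu>" using \<nu>_emeasure[OF NM] off_U[OF N] s\<nu> sM by (auto simp: null_sets_def)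
  qed
qed

text \<open>Under the absolute continuity hypothesis on \<open>\<kappa>\<^sub>2\<close>, the collision term cannot
  charge a null set with more than the singular mass of its input: the part of M off the
  maximal null set U contributes nothing, the part on U at most \<open>M(U)\<close>.\<close>
lemma Fop_null_le_singular_mass:
  fixes X :: "'a::euclidean_space set"
  assumes Kk: "stoch_kernel X \<kappa>" and PM: "M \<in> Pmeas X"
    and H1: "\<forall>\<nu>\<in>Mplus X. absolutely_continuous (lebX X) \<nu> \<longrightarrow>
               (\<forall>x\<in>X. absolutely_continuous (lebX X) (kappa2 X \<kappa> \<nu> x))"
    and K: "K \<in> null_sets (lebX X)"
  shows "measure (Fop X \<kappa> M) K \<le> singular_mass X M"
proof -
  interpret prob_space M using Pmeas_D[OF PM] by blast
  have sM: "sets M = sets (borelX X)" and spM: "space M = X" using Pmeas_D[OF PM] by auto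
  obtain U where U: "U \<in> null_sets (lebX X)" "\<And>N. N \<in> null_sets (lebX X) \<Longrightarrow> emeasure M (N - U) = 0"
    using maximal_null_set[OF finite_measure_axioms sM] by blast
  have UM: "U \<in> sets M" using U(1) sets_lebX sM by (auto simp: null_sets_def)
  have KB: "K \<in> sets (borelX X)" using K sets_lebX by (auto simp: null_sets_def)
  have XU: "X - U \<in> sets M" using UM spM by (metis sets.compl_sets)
  have "emeasure (Fop X \<kappa> M) K \<le> emeasure M U"
  proof (rule Fop_le_of_kappa2_le[OF Kk PM KB])
    fix x assume x: "x \<in> X"
    have M_density: "density M (\<lambda>_. 1) = M" by (simp add: density_1)
    have "emeasure (kappa2 X \<kappa> M x) K
        \<le> emeasure (kappa2 X \<kappa> (density M (indicator (X - U))) x) K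
          + (\<integral>\<^sup>+y. 1 - indicator (X - U) y \<partial>M)"
      using kappa2_density_split[OF Kk sM x _ _ _ KB, of "\<lambda>_. 1" "indicator (X - U)"] XU
      unfolding M_density by (auto simp: indicator_def)
    also have "emeasure (kappa2 X \<kappa> (density M (indicator (X - U))) x) K = 0"
      using H1 absolutely_continuous_off_null_set[OF PM U] x K
      unfolding absolutely_continuous_def by auto
    also have "(\<integral>\<^sup>+y. 1 - indicator (X - U) y \<partial>M) = (\<integral>\<^sup>+y. indicator U y \<partial>M)"
      by (rule nn_integral_cong) (auto simp: spM indicator_def)
    finally show "emeasure (kappa2 X \<kappa> M x) K \<le> emeasure M U" using UM by simp
  qed
  moreover have "finite_measure (Fop X \<kappa> M)" using Fop_prob[OF Kk PM] by (simp add: prob_space_def)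
  ultimately have "measure (Fop X \<kappa> M) K \<le> measure M U"
    by (simp add: finite_measure.emeasure_eq_measure emeasure_eq_measure)
  also have "\<dots> \<le> singular_mass X M" by (rule measure_le_singular_mass[OF finite_measure_axioms U(1)])
  finally show ?thesis .
qed

lemma SUP_contraction_eq_0:
  fixes v :: "'i \<Rightarrow> real"
  assumes A: "A \<noteq> {}" and bdd: "bdd_above (v ` A)" and nonneg: "\<And>p. p \<in> A \<Longrightarrow> 0 \<le> v p"
    and q: "q < 1" and contr: "\<And>p. p \<in> A \<Longrightarrow> v p \<le> q * (SUP p\<in>A. v p)"
  shows "(SUP p\<in>A. v p) = 0"
proof -
  obtain p where p: "p \<in> A" using A by blast
  have S0: "0 \<le> (SUP p\<in>A. v p)" using nonneg[OF p] cSUP_upper[OF p bdd] by linarith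
  have "(SUP p\<in>A. v p) \<le> q * (SUP p\<in>A. v p)" by (rule cSUP_least[OF A contr])
  then show ?thesis using S0 q by (smt (verit) mult_le_cancel_right1)
qed

text \<open>Duhamel estimate for null sets: if the singular masses of \<open>\<mu>\<^sub>r\<close> stay below S on
  \<open>[0,t]\<close>, then \<open>F(\<mu>\<^sub>r)\<close> charges compact null sets with at most S, so
  \<open>\<mu>\<^sub>t(N) \<le> (1 - e\<^sup>-\<^sup>t) S\<close> for compact null sets N and, by inner regularity, for all.\<close>
lemma solution_null_mass_bound:
  fixes X :: "'a::euclidean_space set"
  assumes X: "open X" and Kk: "stoch_kernel X \<kappa>" and sol: "is_solution X \<kappa> \<mu>"
    and ac0: "absolutely_continuous (lebX X) (\<mu> 0)"
    and H1: "\<forall>\<nu>\<in>Mplus X. absolutely_continuous (lebX X) \<nu> \<longrightarrow>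
               (\<forall>x\<in>X. absolutely_continuous (lebX X) (kappa2 X \<kappa> \<nu> x))"
    and t: "0 \<le> t" and S: "\<And>r. r \<in> {0..t} \<Longrightarrow> singular_mass X (\<mu> r) \<le> S"
    and N: "N \<in> null_sets (lebX X)"
  shows "measure (\<mu> t) N \<le> (1 - exp (- t)) * S"
proof -
  have PM: "\<mu> r \<in> Pmeas X" if "0 \<le> r" for r by (rule solution_Pmeas[OF sol that])
  have \<mu>_fin: "finite_measure (\<mu> r)" if "0 \<le> r" for r
    using Pmeas_D(1)[OF PM[OF that]] by (simp add: prob_space_def)
  have st: "sets (\<mu> t) = sets (borelX X)" by (rule Pmeas_D(2)[OF PM[OF t]])
  have S0: "0 \<le> S" using order_trans[OF singular_mass_nonneg[OF \<mu>_fin[of 0]] S[of 0]] t by simp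
  have NM: "N \<in> sets (\<mu> t)" using N sets_lebX st by (auto simp: null_sets_def)
  have "emeasure (\<mu> t) N \<le> ennreal ((1 - exp (- t)) * S)"
  proof (rule emeasure_le_of_compacts[OF X \<mu>_fin[OF t] st NM])
    fix K assume KN: "K \<subseteq> N" and K: "compact K"
    have KX: "K \<subseteq> X" using KN NM st sets.sets_into_space by fastforce
    have KL: "K \<in> null_sets (lebX X)"
      using null_sets_subset[OF N _ KN] compact_in_borelX[OF K KX] sets_lebX by metis
    have "measure (\<mu> t) K \<le> 0 * exp (0 * t) * measure (lebX X) K + (1 - exp (- t)) * S"
    proof (rule duhamel_growth_bound[OF X Kk sol t K KX order_refl order_refl])
      have "K \<in> null_sets (\<mu> 0)" using ac0 KL unfolding absolutely_continuous_def by blast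
      then show "measure (\<mu> 0) K \<le> 0 * measure (lebX X) K" by (simp add: measure_def null_setsD1)
      fix r assume r: "r \<in> {0..t}"
      have "measure (Fop X \<kappa> (\<mu> r)) K \<le> S"
        using Fop_null_le_singular_mass[OF Kk PM H1 KL] S[OF r] r by fastforce
      then show "measure (Fop X \<kappa> (\<mu> r)) K \<le> 0 * 0 * exp (0 * r) * measure (lebX X) K + S"
        by simp
    qed
    then show "emeasure (\<mu> t) K \<le> ennreal ((1 - exp (- t)) * S)"
      using finite_measure.emeasure_eq_measure[OF \<mu>_fin[OF t]] by (simp add: ennreal_leI)
  qed
  then show ?thesis
    using finite_measure.emeasure_eq_measure[OF \<mu>_fin[OF t], of N] S0 t
    by (simp add: ennreal_le_iff)
qed

text \<open>The singular masses s(r) of \<open>\<mu>\<^sub>r\<close> satisfy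
  \<open>s(r) \<le> (1 - e\<^sup>-\<^sup>t) S\<close> with S their supremum over \<open>[0,t]\<close>, hence vanish.\<close>
lemma solution_absolutely_continuous:
  fixes X :: "'a::euclidean_space set"
  assumes X: "open X" and Kk: "stoch_kernel X \<kappa>" and sol: "is_solution X \<kappa> \<mu>"
    and ac0: "absolutely_continuous (lebX X) (\<mu> 0)"
    and H1: "\<forall>\<nu>\<in>Mplus X. absolutely_continuous (lebX X) \<nu> \<longrightarrow>
               (\<forall>x\<in>X. absolutely_continuous (lebX X) (kappa2 X \<kappa> \<nu> x))"
    and t: "0 \<le> t"
  shows "absolutely_continuous (lebX X) (\<mu> t)"
proof -
  have \<mu>_prob: "prob_space (\<mu> r)" "sets (\<mu> r) = sets (borelX X)" if "0 \<le> r" for r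
    using Pmeas_D[OF solution_Pmeas[OF sol that]] by auto
  have \<mu>_fin: "finite_measure (\<mu> r)" if "0 \<le> r" for r
    using \<mu>_prob[OF that] by (simp add: prob_space_def)
  define s where "s r = singular_mass X (\<mu> r)" for r
  define S where "S = (SUP r\<in>{0..t}. s r)"
  have s_nonneg: "0 \<le> s r" if "r \<in> {0..t}" for r
    using that singular_mass_nonneg[OF \<mu>_fin] by (simp add: s_def)
  have bdd: "bdd_above (s ` {0..t})"
    by (rule bdd_aboveI[where M=1]) (auto simp: s_def intro!: singular_mass_le_1 \<mu>_prob(1))
  have s_le_S: "s r \<le> S" if "r \<in> {0..t}" for r unfolding S_def by (rule cSUP_upper[OF that bdd])
  have S0: "0 \<le> S" using s_nonneg[of 0] s_le_S[of 0] t by simp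
  have "s r \<le> (1 - exp (- t)) * S" if r: "r \<in> {0..t}" for r
  proof -
    have "measure (\<mu> r) N \<le> (1 - exp (- r)) * S" if N: "N \<in> null_sets (lebX X)" for N
      by (rule solution_null_mass_bound[OF X Kk sol ac0 H1 _ _ N]) (use r s_le_S in \<open>auto simp: s_def\<close>)
    then have "s r \<le> (1 - exp (- r)) * S"
      unfolding s_def singular_mass_def by (intro cSUP_least) auto
    also have "\<dots> \<le> (1 - exp (- t)) * S" using r S0 by (intro mult_right_mono) auto
    finally show ?thesis .
  qed
  then have "S = 0"
    unfolding S_def by (intro SUP_contraction_eq_0[OF _ bdd s_nonneg]) (use t in \<open>auto simp: S_def\<close>)
  then have "s t \<le> 0" using s_le_S[of t] t by simp
  then show ?thesis
    using absolutely_continuous_singular_mass[OF \<mu>_fin \<mu>_prob(2)] t by (simp add: s_def)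
qed

text \<open>It
  vanishes iff \<open>f \<le> l\<close> almost everywhere, i.e. iff \<open>\<parallel>f\<parallel>\<^sub>\<infinity> \<le> l\<close>.\<close>
definition density_excess :: "'a::euclidean_space set \<Rightarrow> real \<Rightarrow> 'a measure \<Rightarrow> ennreal" where
  "density_excess X l M = (\<integral>\<^sup>+x. RN_deriv (lebX X) M x - ennreal l \<partial>lebX X)"

lemma density_RN_deriv_lebX:
  assumes X: "open X" and ac: "absolutely_continuous (lebX X) M" and sM: "sets M = sets (borelX X)"
  shows "density (lebX X) (RN_deriv (lebX X) M) = M"
  using sigma_finite_measure.density_RN_deriv[OF sigma_finite_lebX[OF X] ac] sM sets_lebX by metis

lemma density_excess_le_1:
  assumes X: "open X" and PM: "M \<in> Pmeas X" and ac: "absolutely_continuous (lebX X) M"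
  shows "density_excess X l M \<le> 1"
proof -
  define f where "f = RN_deriv (lebX X) M"
  have Md: "density (lebX X) f = M" unfolding f_def by (rule density_RN_deriv_lebX[OF X ac Pmeas_D(2)[OF PM]])
  have f_meas: "f \<in> borel_measurable (lebX X)" unfolding f_def by simp
  have X_sets: "X \<in> sets (lebX X)" using sets.top[of "lebX X"] by simp
  have "density_excess X l M \<le> (\<integral>\<^sup>+x. f x * indicator X x \<partial>lebX X)"
    unfolding density_excess_def f_def[symmetric] by (rule nn_integral_mono) (auto simp: indicator_def)
  also have "\<dots> = emeasure M X" using Md[symmetric] X_sets f_meas by (simp add: emeasure_density)
  also have "\<dots> = 1" using prob_space.emeasure_space_1[OF Pmeas_D(1)[OF PM]] Pmeas_D(3)[OF PM] by simp
  finally show ?thesis .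
qed

lemma dens_sup_le_of_density_excess:
  assumes "density_excess X l M = 0"
  shows "dens_sup X M \<le> ennreal l"
proof -
  have "AE x in lebX X. RN_deriv (lebX X) M x - ennreal l = 0"
    using assms unfolding density_excess_def by (subst (asm) nn_integral_0_iff_AE) auto
  then have "AE x in lebX X. RN_deriv (lebX X) M x \<le> ennreal l"
    by eventually_elim (simp add: diff_eq_0_iff_ennreal)
  then show ?thesis unfolding dens_sup_def by (intro esssup_I) simp
qed

lemma truncated_density_measure:
  fixes X :: "'a::euclidean_space set" and l :: real
  assumes X: "open X" and PM: "M \<in> Pmeas X" and ac: "absolutely_continuous (lebX X) M"
  defines "T \<equiv> density (lebX X) (\<lambda>y. min (RN_deriv (lebX X) M y) (ennreal l))"
  shows "T \<in> Mplus X" "absolutely_continuous (lebX X) T" "dens_sup X T \<le> ennreal l"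
proof -
  let ?L = "lebX X"
  define f where "f = RN_deriv ?L M"
  have Md: "density ?L f = M" unfolding f_def by (rule density_RN_deriv_lebX[OF X ac Pmeas_D(2)[OF PM]])
  have f_meas: "f \<in> borel_measurable ?L" unfolding f_def by simp
  have g_meas: "(\<lambda>y. min (f y) (ennreal l)) \<in> borel_measurable ?L" using f_meas by measurable
  have "finite_measure T"
  proof (rule finite_measureI)
    have X_sets: "X \<in> sets ?L" using sets.top[of ?L] by simp
    have "emeasure T X = (\<integral>\<^sup>+y. min (f y) (ennreal l) * indicator X y \<partial>?L)"
      unfolding T_def f_def[symmetric] using g_meas X_sets by (simp add: emeasure_density)
    also have "\<dots> \<le> (\<integral>\<^sup>+y. f y * indicator X y \<partial>?L)"
      by (intro nn_integral_mono mult_right_mono) auto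
    also have "\<dots> = emeasure M X" using Md[symmetric] f_meas X_sets by (simp add: emeasure_density)
    also have "\<dots> = 1" using prob_space.emeasure_space_1[OF Pmeas_D(1)[OF PM]] Pmeas_D(3)[OF PM] by simp
    finally show "emeasure T (space T) \<noteq> \<infinity>" by (auto simp: T_def top_unique)
  qed
  then show "T \<in> Mplus X" unfolding Mplus_def T_def using sets_lebX by simp
  show "absolutely_continuous ?L T"
    unfolding T_def f_def[symmetric] by (rule absolutely_continuous_density[OF g_meas])
  show "dens_sup X T \<le> ennreal l"
    unfolding T_def f_def[symmetric] by (rule dens_sup_density_le[OF X g_meas]) auto
qed

text \<open>Under the hypotheses on \<open>\<kappa>\<^sub>2\<close>, \<open>F(M)(K) \<le> C l |K| + \<integral>(f - l)\<^sup>+\<close>: truncate the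
  density f of M at level l; the truncated part gives \<open>\<kappa>\<^sub>2\<close> a density at most \<open>C l\<close>,
  the rest is controlled by the excess.\<close>
lemma Fop_le_density_excess:
  fixes X :: "'a::euclidean_space set"
  assumes X: "open X" and Kk: "stoch_kernel X \<kappa>" and PM: "M \<in> Pmeas X"
    and ac: "absolutely_continuous (lebX X) M"
    and H1: "\<forall>\<nu>\<in>Mplus X. absolutely_continuous (lebX X) \<nu> \<longrightarrow>
               (\<forall>x\<in>X. absolutely_continuous (lebX X) (kappa2 X \<kappa> \<nu> x))"
    and H2: "\<forall>\<nu>\<in>Mplus X. absolutely_continuous (lebX X) \<nu> \<longrightarrow>
               (\<forall>x\<in>X. dens_sup X (kappa2 X \<kappa> \<nu> x) \<le> ennreal C * dens_sup X \<nu>)"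
    and K: "K \<in> sets (borelX X)"
  shows "emeasure (Fop X \<kappa> M) K
           \<le> ennreal C * ennreal l * emeasure (lebX X) K + density_excess X l M"
proof (rule Fop_le_of_kappa2_le[OF Kk PM K])
  fix x assume x: "x \<in> X"
  let ?L = "lebX X"
  define f where "f = RN_deriv ?L M"
  define T where "T = density ?L (\<lambda>y. min (f y) (ennreal l))"
  have Md: "density ?L f = M" unfolding f_def by (rule density_RN_deriv_lebX[OF X ac Pmeas_D(2)[OF PM]])
  have f_meas: "f \<in> borel_measurable ?L" unfolding f_def by simp
  have g_meas: "(\<lambda>y. min (f y) (ennreal l)) \<in> borel_measurable ?L" using f_meas by measurable
  have T: "T \<in> Mplus X" "absolutely_continuous ?L T" "dens_sup X T \<le> ennreal l"
    unfolding T_def f_def by (rule truncated_density_measure[OF X PM ac])+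
  have "emeasure (kappa2 X \<kappa> T x) K \<le> dens_sup X (kappa2 X \<kappa> T x) * emeasure ?L K"
    by (rule emeasure_le_dens_sup[OF X _ sets_kappa2 K]) (use H1 T x in blast)
  also have "\<dots> \<le> ennreal C * ennreal l * emeasure ?L K"
  proof (rule mult_right_mono)
    have "dens_sup X (kappa2 X \<kappa> T x) \<le> ennreal C * dens_sup X T" using H2 T x by blast
    also have "\<dots> \<le> ennreal C * ennreal l" using T(3) by (rule mult_left_mono) simp
    finally show "dens_sup X (kappa2 X \<kappa> T x) \<le> ennreal C * ennreal l" .
  qed simp
  moreover have "(\<integral>\<^sup>+y. f y - min (f y) (ennreal l) \<partial>?L) = density_excess X l M"
    unfolding density_excess_def f_def[symmetric]
  proof (intro nn_integral_cong)
    fix y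
    show "f y - min (f y) (ennreal l) = f y - ennreal l"
    proof (cases "f y \<le> ennreal l")
      case True
      then have "f y < \<top>" using ennreal_less_top le_less_trans by blast
      then show ?thesis using True by (simp add: diff_eq_0_iff_ennreal)
    qed (simp add: min_def)
  qed
  moreover have "emeasure (kappa2 X \<kappa> M x) K
      \<le> emeasure (kappa2 X \<kappa> T x) K + (\<integral>\<^sup>+y. f y - min (f y) (ennreal l) \<partial>?L)"
    using kappa2_density_split[OF Kk sets_lebX x f_meas g_meas _ K] unfolding Md T_def by simp
  ultimately show "emeasure (kappa2 X \<kappa> M x) K
      \<le> ennreal C * ennreal l * emeasure ?L K + density_excess X l M"
    by (metis add_right_mono order_trans)
qed

text \<open>Conversely, a mass bound \<open>M(A) \<le> l |A| + c\<close> for all Borel sets bounds the excess by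
  c: apply it to \<open>A = {f > l}\<close>, where \<open>M(A) = l |A| + \<integral>(f - l)\<^sup>+\<close>.\<close>
lemma density_excess_le_of_mass_bound:
  fixes X :: "'a::euclidean_space set"
  assumes X: "open X" and PM: "M \<in> Pmeas X" and ac: "absolutely_continuous (lebX X) M"
    and bound: "\<And>A. A \<in> sets (lebX X) \<Longrightarrow> emeasure M A \<le> ennreal l * emeasure (lebX X) A + c"
  shows "density_excess X l M \<le> c"
proof -
  let ?L = "lebX X"
  define f where "f = RN_deriv ?L M"
  have Md: "density ?L f = M" unfolding f_def by (rule density_RN_deriv_lebX[OF X ac Pmeas_D(2)[OF PM]])
  have f_meas: "f \<in> borel_measurable ?L" unfolding f_def by simp
  define A where "A = {x \<in> space ?L. ennreal l < f x}"
  have A: "A \<in> sets ?L" unfolding A_def using f_meas by measurable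
  have "emeasure M A = (\<integral>\<^sup>+x. f x * indicator A x \<partial>?L)"
    using Md[symmetric] f_meas A by (simp add: emeasure_density)
  also have "\<dots> = (\<integral>\<^sup>+x. (f x - ennreal l) + ennreal l * indicator A x \<partial>?L)"
  proof (rule nn_integral_cong)
    fix x assume x: "x \<in> space ?L"
    show "f x * indicator A x = (f x - ennreal l) + ennreal l * indicator A x"
    proof (cases "x \<in> A")
      case True
      then have "ennreal l \<le> f x" unfolding A_def by (auto intro: less_imp_le)
      then show ?thesis using True by (simp add: add.commute add_diff_inverse_ennreal)
    next
      case False
      then have "f x \<le> ennreal l" unfolding A_def using x by auto
      moreover have "f x < \<top>" using \<open>f x \<le> ennreal l\<close> ennreal_less_top le_less_trans by blast
      ultimately have "f x - ennreal l = 0" by (simp add: diff_eq_0_iff_ennreal)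
      then show ?thesis using False by simp
    qed
  qed
  also have "\<dots> = density_excess X l M + ennreal l * emeasure ?L A"
    unfolding density_excess_def f_def[symmetric]
    using f_meas A by (simp add: nn_integral_add nn_integral_cmult_indicator)
  finally have M_A: "emeasure M A = density_excess X l M + ennreal l * emeasure ?L A" .
  have "ennreal l * emeasure ?L A \<le> emeasure M A" unfolding M_A by simp
  also have "\<dots> \<le> 1" using prob_space.emeasure_le_1[OF Pmeas_D(1)[OF PM]] by simp
  finally have fin: "ennreal l * emeasure ?L A \<noteq> \<infinity>" by (auto simp: top_unique)
  have "ennreal l * emeasure ?L A + density_excess X l M \<le> ennreal l * emeasure ?L A + c"
    using bound[OF A] M_A by (simp add: add.commute)
  then show ?thesis using fin ennreal_add_left_cancel_le by metis
qed

text \<open>Duhamel estimate for Borel sets: if the excess of \<open>f\<^sub>r\<close> over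
  \<open>\<ell>(r) = l\<^sub>0 e\<^sup>C\<^sup>r\<close> stays below S on \<open>[0,t]\<close> and \<open>\<parallel>f\<^sub>0\<parallel>\<^sub>\<infinity> \<le> l\<^sub>0\<close>, then
  \<open>F(\<mu>\<^sub>r)(K) \<le> C \<ell>(r) |K| + S\<close>, so \<open>\<mu>\<^sub>t(K) \<le> \<ell>(t) |K| + (1 - e\<^sup>-\<^sup>t) S\<close> for
  compact K and, by inner regularity, the same bound holds for every Borel set.\<close>
lemma solution_mass_bound:
  fixes X :: "'a::euclidean_space set"
  assumes X: "open X" and Kk: "stoch_kernel X \<kappa>" and sol: "is_solution X \<kappa> \<mu>"
    and ac: "\<And>r. 0 \<le> r \<Longrightarrow> absolutely_continuous (lebX X) (\<mu> r)"
    and H1: "\<forall>\<nu>\<in>Mplus X. absolutely_continuous (lebX X) \<nu> \<longrightarrow>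
               (\<forall>x\<in>X. absolutely_continuous (lebX X) (kappa2 X \<kappa> \<nu> x))"
    and H2: "\<forall>\<nu>\<in>Mplus X. absolutely_continuous (lebX X) \<nu> \<longrightarrow>
               (\<forall>x\<in>X. dens_sup X (kappa2 X \<kappa> \<nu> x) \<le> ennreal C * dens_sup X \<nu>)"
    and C: "0 < C" and t: "0 \<le> t" and l0: "0 \<le> l0" and init: "dens_sup X (\<mu> 0) \<le> ennreal l0"
    and S0: "0 \<le> S" and S: "\<And>r. r \<in> {0..t} \<Longrightarrow> density_excess X (l0 * exp (C * r)) (\<mu> r) \<le> ennreal S"
    and A: "A \<in> sets (lebX X)"
  shows "emeasure (\<mu> t) A
           \<le> ennreal (l0 * exp (C * t)) * emeasure (lebX X) A + ennreal ((1 - exp (- t)) * S)"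
proof -
  let ?L = "lebX X"
  have PM: "\<mu> r \<in> Pmeas X" if "0 \<le> r" for r by (rule solution_Pmeas[OF sol that])
  have \<mu>_fin: "finite_measure (\<mu> r)" if "0 \<le> r" for r
    using Pmeas_D(1)[OF PM[OF that]] by (simp add: prob_space_def)
  have st: "sets (\<mu> t) = sets (borelX X)" by (rule Pmeas_D(2)[OF PM[OF t]])
  show ?thesis
  proof (rule emeasure_le_of_compacts[OF X \<mu>_fin[OF t] st])
    show "A \<in> sets (\<mu> t)" using A st sets_lebX[of X] by simp
    fix K assume KA: "K \<subseteq> A" and K: "compact K"
    have KX: "K \<subseteq> X" using KA sets.sets_into_space[OF A] by auto
    have KB: "K \<in> sets (borelX X)" by (rule compact_in_borelX[OF K KX])
    have leb_K: "emeasure ?L K = ennreal (measure ?L K)"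
      using lebX_compact_finite[OF X K KX] by (simp add: emeasure_eq_ennreal_measure less_top)
    have "measure (\<mu> t) K \<le> l0 * exp (C * t) * measure ?L K + (1 - exp (- t)) * S"
    proof (rule duhamel_growth_bound[OF X Kk sol t K KX l0 less_imp_le[OF C]])
      have "emeasure (\<mu> 0) K \<le> ennreal l0 * emeasure ?L K"
        using emeasure_le_dens_sup[OF X ac Pmeas_D(2)[OF PM] KB, of 0] mult_right_mono[OF init]
        by (auto intro: order_trans)
      then show "measure (\<mu> 0) K \<le> l0 * measure ?L K"
        using finite_measure.emeasure_eq_measure[OF \<mu>_fin, of 0 K] leb_K l0
        by (simp add: ennreal_mult'[symmetric] ennreal_le_iff)
      fix r assume r: "r \<in> {0..t}"
      have "emeasure (Fop X \<kappa> (\<mu> r)) K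
          \<le> ennreal C * ennreal (l0 * exp (C * r)) * emeasure ?L K + ennreal S"
        using Fop_le_density_excess[OF X Kk PM ac H1 H2 KB, of r "l0 * exp (C * r)"] S[OF r] r
        by (auto intro: order_trans add_left_mono)
      also have "\<dots> = ennreal (C * l0 * exp (C * r) * measure ?L K + S)"
        using leb_K C l0 S0 by (simp add: ennreal_mult ennreal_plus mult.assoc)
      finally have "emeasure (Fop X \<kappa> (\<mu> r)) K \<le> ennreal (C * l0 * exp (C * r) * measure ?L K + S)" .
      moreover have "emeasure (Fop X \<kappa> (\<mu> r)) K = ennreal (measure (Fop X \<kappa> (\<mu> r)) K)"
        using Fop_prob[OF Kk PM] r by (simp add: prob_space_def finite_measure.emeasure_eq_measure)
      moreover have "0 \<le> C * l0 * exp (C * r) * measure ?L K + S" using C l0 S0 by simp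
      ultimately show "measure (Fop X \<kappa> (\<mu> r)) K \<le> C * l0 * exp (C * r) * measure ?L K + S"
        by (metis ennreal_le_iff)
    qed
    then have "emeasure (\<mu> t) K \<le> ennreal (l0 * exp (C * t) * measure ?L K + (1 - exp (- t)) * S)"
      using finite_measure.emeasure_eq_measure[OF \<mu>_fin[OF t]] by (simp add: ennreal_leI)
    also have "\<dots> = ennreal (l0 * exp (C * t)) * emeasure ?L K + ennreal ((1 - exp (- t)) * S)"
      using leb_K l0 S0 t by (simp add: ennreal_plus ennreal_mult)
    also have "\<dots> \<le> ennreal (l0 * exp (C * t)) * emeasure ?L A + ennreal ((1 - exp (- t)) * S)"
      using A KA by (intro add_right_mono mult_left_mono emeasure_mono) auto
    finally show "emeasure (\<mu> t) K
        \<le> ennreal (l0 * exp (C * t)) * emeasure ?L A + ennreal ((1 - exp (- t)) * S)" .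
  qed
qed

text \<open>With \<open>\<ell>(r) = \<parallel>f\<^sub>0\<parallel>\<^sub>\<infinity> e\<^sup>C\<^sup>r\<close>, the excesses
  e(r) of \<open>f\<^sub>r\<close> over \<open>\<ell>(r)\<close> satisfy \<open>e(r) \<le> (1 - e\<^sup>-\<^sup>t) S\<close> with S their supremum over
  \<open>[0,t]\<close>, by the mass bound and the converse estimate for the excess.  Hence they
  vanish, i.e. \<open>f\<^sub>t \<le> \<ell>(t)\<close> almost everywhere.\<close>
lemma solution_dens_sup_growth:
  fixes X :: "'a::euclidean_space set"
  assumes X: "open X" and Kk: "stoch_kernel X \<kappa>" and sol: "is_solution X \<kappa> \<mu>"
    and ac: "\<And>r. 0 \<le> r \<Longrightarrow> absolutely_continuous (lebX X) (\<mu> r)"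
    and H1: "\<forall>\<nu>\<in>Mplus X. absolutely_continuous (lebX X) \<nu> \<longrightarrow>
               (\<forall>x\<in>X. absolutely_continuous (lebX X) (kappa2 X \<kappa> \<nu> x))"
    and H2: "\<forall>\<nu>\<in>Mplus X. absolutely_continuous (lebX X) \<nu> \<longrightarrow>
               (\<forall>x\<in>X. dens_sup X (kappa2 X \<kappa> \<nu> x) \<le> ennreal C * dens_sup X \<nu>)"
    and C: "0 < C" and t: "0 \<le> t"
  shows "dens_sup X (\<mu> t) \<le> dens_sup X (\<mu> 0) * ennreal (exp (C * t))"
proof (cases "dens_sup X (\<mu> 0) = \<top>")
  case False
  define l0 where "l0 = enn2real (dens_sup X (\<mu> 0))"
  have dens_sup0: "dens_sup X (\<mu> 0) = ennreal l0" unfolding l0_def using False by (simp add: less_top)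
  have l0: "0 \<le> l0" unfolding l0_def by simp
  define level where "level r = l0 * exp (C * r)" for r
  define e where "e r = enn2real (density_excess X (level r) (\<mu> r))" for r
  have e_eq: "ennreal (e r) = density_excess X (level r) (\<mu> r)" and e_le_1: "e r \<le> 1"
    if "0 \<le> r" for r
    using density_excess_le_1[OF X solution_Pmeas[OF sol that] ac[OF that], of "level r"]
    by (auto simp: e_def ennreal_enn2real_if top_unique enn2real_leI)
  have e_nonneg: "0 \<le> e r" for r by (simp add: e_def)
  define S where "S = (SUP r\<in>{0..t}. e r)"
  have bdd: "bdd_above (e ` {0..t})" by (rule bdd_aboveI[where M=1]) (auto intro: e_le_1)
  have e_le_S: "e r \<le> S" if "r \<in> {0..t}" for r unfolding S_def by (rule cSUP_upper[OF that bdd])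
  have S0: "0 \<le> S" using order_trans[OF e_nonneg e_le_S, of 0] t by simp
  have "e r \<le> (1 - exp (- t)) * S" if r: "r \<in> {0..t}" for r
  proof -
    have r0: "0 \<le> r" using r by simp
    have "density_excess X (level r) (\<mu> r) \<le> ennreal ((1 - exp (- r)) * S)"
    proof (rule density_excess_le_of_mass_bound[OF X solution_Pmeas[OF sol r0] ac[OF r0]])
      fix A assume A: "A \<in> sets (lebX X)"
      have excess_S: "density_excess X (l0 * exp (C * r')) (\<mu> r') \<le> ennreal S" if "r' \<in> {0..r}" for r'
      proof -
        have r': "0 \<le> r'" "r' \<in> {0..t}" using that r by auto
        have "density_excess X (l0 * exp (C * r')) (\<mu> r') = ennreal (e r')"
          using e_eq[OF r'(1)] by (simp add: level_def)
        also have "\<dots> \<le> ennreal S" using e_le_S[OF r'(2)] by (rule ennreal_leI)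
        finally show ?thesis .
      qed
      show "emeasure (\<mu> r) A
          \<le> ennreal (level r) * emeasure (lebX X) A + ennreal ((1 - exp (- r)) * S)"
        unfolding level_def
        by (rule solution_mass_bound[OF X Kk sol ac H1 H2 C r0 l0 eq_refl[OF dens_sup0] S0 excess_S A])
    qed
    then have "ennreal (e r) \<le> ennreal ((1 - exp (- r)) * S)" by (simp only: e_eq[OF r0])
    then have "e r \<le> (1 - exp (- r)) * S" using S0 r0 by (simp add: ennreal_le_iff)
    also have "\<dots> \<le> (1 - exp (- t)) * S" using r S0 by (intro mult_right_mono) auto
    finally show ?thesis .
  qed
  then have "S = 0"
    unfolding S_def using t by (intro SUP_contraction_eq_0[OF _ bdd]) (auto simp: e_nonneg S_def)
  then have "e t = 0" using e_le_S[of t] e_nonneg[of t] t by simp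
  then have "density_excess X (level t) (\<mu> t) = 0" using e_eq[OF t] by simp
  then have "dens_sup X (\<mu> t) \<le> ennreal (level t)" by (rule dens_sup_le_of_density_excess)
  then show ?thesis using l0 by (simp add: dens_sup0 level_def ennreal_mult)
qed simp

theorem proposition3p2:
  fixes X :: "'a::euclidean_space set"
    and \<kappa> :: "'a \<Rightarrow> 'a \<Rightarrow> 'a measure"
    and \<mu> :: "real \<Rightarrow> 'a measure"
  assumes "open X"
    and "stoch_kernel X \<kappa>"
    and "is_solution X \<kappa> \<mu>"
    and "absolutely_continuous (lebX X) (\<mu> 0)"
    and "\<forall>\<nu>\<in>Mplus X. absolutely_continuous (lebX X) \<nu> \<longrightarrow>
           (\<forall>y\<in>X. absolutely_continuous (lebX X) (kappa1 X \<kappa> \<nu> y)) \<and>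
           (\<forall>x\<in>X. absolutely_continuous (lebX X) (kappa2 X \<kappa> \<nu> x))"
  shows "(\<forall>t\<ge>0. absolutely_continuous (lebX X) (\<mu> t)) \<and>
         (\<forall>C::real. C > 0 \<longrightarrow>
            (\<forall>\<nu>\<in>Mplus X. absolutely_continuous (lebX X) \<nu> \<longrightarrow>
               (\<forall>x\<in>X. dens_sup X (kappa2 X \<kappa> \<nu> x) \<le> ennreal C * dens_sup X \<nu>)) \<longrightarrow>
            (\<forall>t\<ge>0. dens_sup X (\<mu> t) \<le> dens_sup X (\<mu> 0) * ennreal (exp (C * t))))"
proof -
  have H1: "\<forall>\<nu>\<in>Mplus X. absolutely_continuous (lebX X) \<nu> \<longrightarrow>
              (\<forall>x\<in>X. absolutely_continuous (lebX X) (kappa2 X \<kappa> \<nu> x))"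
    using assms(5) by blast
  have ac: "absolutely_continuous (lebX X) (\<mu> t)" if "0 \<le> t" for t
    by (rule solution_absolutely_continuous[OF assms(1-4) H1 that])
  then show ?thesis
    using solution_dens_sup_growth[OF assms(1-3) ac H1] by blast
qed
end
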